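(* Let $\Omega\subset\mathbb{R}^d$ be closed and convex with finite diameter, and let $\mathrm{Vars}$ be the Gaussian variation API with parameter $\alpha>0$. Then for any $z_1,z_2\in\Omega$, $$\mathbb{E}\Big[\min_{z\in\mathrm{Vars}(z_1)}\|z-z_2\|_2\Big]\le(1-\gamma)\|z_1-z_2\|_2+\alpha,\qquad\gamma=\frac{1}{8\pi[(\sqrt d+\log 2)^2+\log 2]},$$ where the expectation is over the randomness of $\mathrm{Vars}(z_1)$.
   Context: Gaussian variation API with parameter $\alpha>0$: $\mathrm{Vars}(z)=\{z\}\cup\{\Pi_\Omega(z+N^{k,l}):k\in\{1,2\},\ l\in\{1,\dots,\lceil\log_2(\operatorname{diam}(\Omega)/\alpha)\rceil\}\}$, where $\Pi_\Omega$ is the Euclidean projection onto $\Omega$ and $N^{k,l}\sim\mathcal{N}(0,\sigma_l^2I_d)$ are independent with $\sigma_l=\frac{\alpha2^{l-1}}{\sqrt\pi[(\sqrt d+\log 2)^2+\log 2]}$. *)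

theory Defs
  imports "HOL-Analysis.Analysis" "HOL-Probability.Probability"
begin

definition gaussian_iso :: "real \<Rightarrow> 'a::euclidean_space measure" where
  "gaussian_iso s = density lborel
     (\<lambda>x. ennreal ((2 * pi * s\<^sup>2) powr (- real DIM('a) / 2) * exp (- (norm x)\<^sup>2 / (2 * s\<^sup>2))))"

definition num_scales :: "'a::euclidean_space set \<Rightarrow> real \<Rightarrow> int" where
  "num_scales \<Omega> \<alpha> = \<lceil>log 2 (diameter \<Omega> / \<alpha>)\<rceil>"

definition var_index :: "'a::euclidean_space set \<Rightarrow> real \<Rightarrow> (nat \<times> nat) set" where
  "var_index \<Omega> \<alpha> = {1,2} \<times> {1..nat (num_scales \<Omega> \<alpha>)}"

definition gauss_const :: "nat \<Rightarrow> real" where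
  "gauss_const d = (sqrt (real d) + ln 2)\<^sup>2 + ln 2"

definition gauss_sigma :: "nat \<Rightarrow> real \<Rightarrow> nat \<Rightarrow> real" where
  "gauss_sigma d \<alpha> l = \<alpha> * 2 ^ (l - 1) / (sqrt pi * gauss_const d)"

definition noise_measure :: "'a::euclidean_space set \<Rightarrow> real \<Rightarrow> ((nat \<times> nat) \<Rightarrow> 'a) measure" where
  "noise_measure \<Omega> \<alpha> = PiM (var_index \<Omega> \<alpha>)
      (\<lambda>(k,l). gaussian_iso (gauss_sigma DIM('a) \<alpha> l))"

definition Vars :: "'a::euclidean_space set \<Rightarrow> real \<Rightarrow> 'a \<Rightarrow> ((nat \<times> nat) \<Rightarrow> 'a) \<Rightarrow> 'a set" where
  "Vars \<Omega> \<alpha> z N = insert z ((\<lambda>i. closest_point \<Omega> (z + N i)) ` var_index \<Omega> \<alpha>)"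

end

theory Submission
  imports Defs
begin

text \<open>Projection onto \<open>\<Omega>\<close> is 1-Lipschitz and fixes \<open>z2\<close>, so a single variation at scale \<open>\<sigma>\<close>
  reduces the claim to bounding \<open>E min r (norm (X - u))\<close> for \<open>X \<sim> N(0, \<sigma>\<^sup>2 I)\<close>, \<open>u = z2 - z1\<close>,
  \<open>r = norm u\<close>. Adding \<open>E max 0 (X \<bullet> u / r) = \<sigma> / sqrt (2 pi)\<close> (the projection \<open>X \<bullet> u / r\<close> is a
  one-dimensional Gaussian) gives an integrand below \<open>r + (norm X)\<^sup>2 / (2 r)\<close>, whose mean is
  \<open>r + d \<sigma>\<^sup>2 / (2 r)\<close>. The dyadic scales contain one with \<open>\<sigma> = s r / (sqrt pi c\<^sub>d)\<close>,
  \<open>1/4 \<le> s \<le> 1/2\<close>, and there the gain \<open>\<sigma> / sqrt (2 pi) - d \<sigma>\<^sup>2 / (2 r)\<close> is at least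
  \<open>r / (8 pi c\<^sub>d)\<close>. When \<open>r < 2 \<alpha>\<close> the candidate \<open>z1\<close> itself already satisfies the bound.\<close>

definition centered_normal :: "real \<Rightarrow> real measure" where
  "centered_normal s = density lborel (\<lambda>x. ennreal (normal_density 0 s x))"

lemma prob_space_centered_normal: "s > 0 \<Longrightarrow> prob_space (centered_normal s)"
  unfolding centered_normal_def by (rule prob_space_normal_density)

lemma sets_centered_normal [measurable_cong, simp]: "sets (centered_normal s) = sets borel"
  by (simp add: centered_normal_def)

lemma space_centered_normal [simp]: "space (centered_normal s) = UNIV"
  by (simp add: centered_normal_def)

definition gaussian_coords :: "real \<Rightarrow> ('a::euclidean_space \<Rightarrow> real) measure" where
  "gaussian_coords s = PiM Basis (\<lambda>_. centered_normal s)"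

definition vector_of_coords :: "('a::euclidean_space \<Rightarrow> real) \<Rightarrow> 'a" where
  "vector_of_coords f = (\<Sum>b\<in>Basis. f b *\<^sub>R b)"

lemma prob_space_gaussian_coords: "s > 0 \<Longrightarrow> prob_space (gaussian_coords s)"
  unfolding gaussian_coords_def by (intro prob_space_PiM prob_space_centered_normal)

lemma sets_gaussian_coords:
  "sets (gaussian_coords s :: ('a::euclidean_space \<Rightarrow> real) measure) = sets (PiM (Basis::'a set) (\<lambda>_. lborel))"
  unfolding gaussian_coords_def by (intro sets_PiM_cong) auto

lemma measurable_gaussian_coordsI:
  "f \<in> measurable (PiM (Basis::'a::euclidean_space set) (\<lambda>_. lborel)) M \<Longrightarrow> f \<in> measurable (gaussian_coords s) M"
  using measurable_cong_sets[OF sets_gaussian_coords refl] by blast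

lemma measurable_vector_of_coords:
  "vector_of_coords \<in> borel_measurable (PiM (Basis::'a::euclidean_space set) (\<lambda>_. lborel))"
  unfolding vector_of_coords_def by measurable

lemma norm_vector_of_coords_squared:
  "(norm (vector_of_coords f :: 'a::euclidean_space))\<^sup>2 = (\<Sum>b\<in>Basis. (f b)\<^sup>2)"
proof -
  have "(norm (vector_of_coords f :: 'a))\<^sup>2
      = (\<Sum>c\<in>Basis. (vector_of_coords f \<bullet> c) * (vector_of_coords f \<bullet> c))"
    by (simp add: power2_norm_eq_inner euclidean_inner[symmetric])
  then show ?thesis by (simp add: vector_of_coords_def power2_eq_square)
qed

lemma inner_vector_of_coords:
  "vector_of_coords f \<bullet> u = (\<Sum>b\<in>(Basis::'a::euclidean_space set). f b * (u \<bullet> b))"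
  unfolding vector_of_coords_def by (subst euclidean_inner) (simp cong: sum.cong)

lemma powr_minus_half_eq_inverse_sqrt_power:
  assumes "a > 0" shows "a powr (- real d / 2) = (1 / sqrt a) ^ d"
proof -
  have "(1 / sqrt a) ^ d = (a powr (-1/2)) ^ d"
    using assms by (simp add: powr_minus_divide powr_half_sqrt)
  also have "\<dots> = a powr (- real d / 2)"
    using assms by (simp add: powr_realpow[symmetric] powr_powr)
  finally show ?thesis by simp
qed

lemma gaussian_iso_density_eq_prod:
  assumes "s > 0"
  shows "(2 * pi * s\<^sup>2) powr (- real DIM('a::euclidean_space) / 2)
           * exp (- (norm (vector_of_coords f :: 'a))\<^sup>2 / (2 * s\<^sup>2))
         = (\<Prod>b\<in>(Basis::'a set). normal_density 0 s (f b))"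
proof -
  have "(\<Prod>b\<in>(Basis::'a set). normal_density 0 s (f b))
      = (1 / sqrt (2 * pi * s\<^sup>2)) ^ DIM('a) * exp (\<Sum>b\<in>(Basis::'a set). - (f b)\<^sup>2 / (2 * s\<^sup>2))"
    by (simp add: normal_density_def prod.distrib exp_sum prod_dividef power_one_over)
  also have "(\<Sum>b\<in>(Basis::'a set). - (f b)\<^sup>2 / (2 * s\<^sup>2)) = - (\<Sum>b\<in>(Basis::'a set). (f b)\<^sup>2) / (2 * s\<^sup>2)"
    by (simp add: sum_divide_distrib sum_negf)
  moreover have "(2 * pi * s\<^sup>2) powr (- real DIM('a) / 2) = (1 / sqrt (2 * pi * s\<^sup>2)) ^ DIM('a)"
    using assms by (intro powr_minus_half_eq_inverse_sqrt_power) simp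
  ultimately show ?thesis by (simp add: norm_vector_of_coords_squared)
qed

lemma indicator_PiE_eq_prod:
  assumes "f \<in> extensional I" "finite I"
  shows "indicator (PiE I A) f = (\<Prod>i\<in>I. indicator (A i) (f i) :: ennreal)"
proof (cases "f \<in> PiE I A")
  case False
  then obtain i where "i \<in> I" "f i \<notin> A i" using assms by (auto simp: PiE_iff)
  then show ?thesis using False assms by (subst prod_zero) (auto simp: indicator_def intro!: bexI[of _ i])
qed (auto simp: PiE_iff indicator_def)

lemma gaussian_coords_eq_density:
  assumes "s > 0"
  shows "(gaussian_coords s :: ('a::euclidean_space \<Rightarrow> real) measure) =
     density (PiM (Basis::'a set) (\<lambda>_. lborel)) (\<lambda>f. \<Prod>b\<in>Basis. ennreal (normal_density 0 s (f b)))"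
proof -
  interpret product_prob_space "\<lambda>_::'a. centered_normal s"
    by (intro product_prob_spaceI prob_space_centered_normal assms)
  interpret L: product_sigma_finite "\<lambda>_::'a. lborel"
    by (simp add: product_sigma_finite_def sigma_finite_lborel)
  let ?p = "\<lambda>f. \<Prod>b\<in>(Basis::'a set). ennreal (normal_density 0 s (f b))"
  show ?thesis
    unfolding gaussian_coords_def
  proof (rule PiM_eqI[symmetric])
    show "sets (density (PiM Basis (\<lambda>_. lborel)) ?p) = sets (PiM (Basis::'a set) (\<lambda>_. centered_normal s))"
      by (simp only: sets_density) (intro sets_PiM_cong; simp)
    fix A :: "'a \<Rightarrow> real set" assume A: "\<And>i. i \<in> Basis \<Longrightarrow> A i \<in> sets (centered_normal s)"
    have p: "?p \<in> borel_measurable (PiM Basis (\<lambda>_::'a. lborel))" by measurable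
    have "Pi\<^sub>E Basis A \<in> sets (PiM Basis (\<lambda>_::'a. lborel))"
      by (rule sets_PiM_I_finite) (use A in auto)
    then have "emeasure (density (PiM Basis (\<lambda>_. lborel)) ?p) (Pi\<^sub>E Basis A)
        = (\<integral>\<^sup>+ f. ?p f * indicator (Pi\<^sub>E Basis A) f \<partial>PiM Basis (\<lambda>_. lborel))"
      by (rule emeasure_density[OF p])
    also have "\<dots> = (\<integral>\<^sup>+ f. (\<Prod>b\<in>Basis. ennreal (normal_density 0 s (f b)) * indicator (A b) (f b))
                       \<partial>PiM Basis (\<lambda>_. lborel))"
      by (intro nn_integral_cong) (simp add: indicator_PiE_eq_prod prod.distrib[symmetric] space_PiM PiE_iff)
    also have "\<dots> = (\<Prod>b\<in>Basis. \<integral>\<^sup>+ x. ennreal (normal_density 0 s x) * indicator (A b) x \<partial>lborel)"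
      using A by (subst L.product_nn_integral_prod) auto
    also have "\<dots> = (\<Prod>b\<in>Basis. emeasure (centered_normal s) (A b))"
      using A by (intro prod.cong refl) (simp add: centered_normal_def emeasure_density)
    finally show "emeasure (density (PiM Basis (\<lambda>_. lborel)) ?p) (Pi\<^sub>E Basis A)
        = (\<Prod>b\<in>Basis. emeasure (centered_normal s) (A b))" .
  qed simp
qed

lemma gaussian_iso_eq_distr_coords:
  assumes "s > 0"
  shows "(gaussian_iso s :: 'a::euclidean_space measure) = distr (gaussian_coords s) borel vector_of_coords"
proof -
  let ?p = "\<lambda>x::'a. ennreal ((2 * pi * s\<^sup>2) powr (- real DIM('a) / 2) * exp (- (norm x)\<^sup>2 / (2 * s\<^sup>2)))"
  have "(gaussian_iso s :: 'a measure) = density (distr (PiM (Basis::'a set) (\<lambda>_. lborel)) borel vector_of_coords) ?p"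
    unfolding gaussian_iso_def vector_of_coords_def by (subst lborel_eq[where 'a='a]) (rule refl)
  also have "\<dots> = distr (density (PiM (Basis::'a set) (\<lambda>_. lborel)) (\<lambda>f. ?p (vector_of_coords f))) borel vector_of_coords"
    by (intro density_distr measurable_vector_of_coords) measurable
  also have "density (PiM (Basis::'a set) (\<lambda>_. lborel)) (\<lambda>f. ?p (vector_of_coords f)) = gaussian_coords s"
    using assms
    by (simp only: gaussian_iso_density_eq_prod gaussian_coords_eq_density)
       (simp add: prod_ennreal normal_density_nonneg)
  finally show ?thesis .
qed

lemma prob_space_gaussian_iso: "s > 0 \<Longrightarrow> prob_space (gaussian_iso s :: 'a::euclidean_space measure)"
  by (simp add: gaussian_iso_eq_distr_coords prob_space.prob_space_distr prob_space_gaussian_coords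
      measurable_gaussian_coordsI measurable_vector_of_coords)

lemma distr_gaussian_coords_component:
  assumes "s > 0" "b \<in> Basis" "sets M = sets borel"
  shows "distr (gaussian_coords s :: ('a::euclidean_space \<Rightarrow> real) measure) M (\<lambda>f. f b) = centered_normal s"
proof -
  have "distr (gaussian_coords s :: ('a \<Rightarrow> real) measure) M (\<lambda>f. f b)
      = distr (gaussian_coords s) (centered_normal s) (\<lambda>f. f b)"
    using assms(3) by (intro distr_cong) auto
  also have "\<dots> = centered_normal s"
    unfolding gaussian_coords_def using assms by (intro distr_PiM_component prob_space_centered_normal)
  finally show ?thesis .
qed

lemma indep_vars_gaussian_coords:
  assumes "s > 0"
  shows "prob_space.indep_vars (gaussian_coords s :: ('a::euclidean_space \<Rightarrow> real) measure)
           (\<lambda>_. borel) (\<lambda>b f. f b) Basis"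
proof -
  interpret P: prob_space "gaussian_coords s :: ('a \<Rightarrow> real) measure"
    by (rule prob_space_gaussian_coords[OF assms])
  have component: "(\<lambda>f::'a\<Rightarrow>real. f b) \<in> borel_measurable (gaussian_coords s)" if "b \<in> Basis" for b
    using measurable_component_singleton[OF that, of "\<lambda>_. lborel"]
    by (intro measurable_gaussian_coordsI) (simp add: measurable_lborel1)
  have "distr (gaussian_coords s :: ('a \<Rightarrow> real) measure) (PiM Basis (\<lambda>_. borel)) (\<lambda>f. \<lambda>b\<in>Basis. f b)
      = distr (gaussian_coords s) (gaussian_coords s) (\<lambda>f. f)"
    by (intro distr_cong refl)
       (auto simp: sets_gaussian_coords gaussian_coords_def space_PiM PiE_iff extensional_restrict
             intro!: sets_PiM_cong)
  also have "\<dots> = PiM Basis (\<lambda>b. distr (gaussian_coords s :: ('a \<Rightarrow> real) measure) borel (\<lambda>f. f b))"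
    unfolding distr_id gaussian_coords_def[of s]
    by (intro PiM_cong refl)
       (simp add: distr_gaussian_coords_component[OF assms, unfolded gaussian_coords_def])
  finally show ?thesis
    by (subst P.indep_vars_iff_distr_eq_PiM') (use component in auto)
qed

lemma distributed_gaussian_coords_inner:
  assumes s: "s > 0" and u: "u \<noteq> 0"
  shows "distributed (gaussian_coords s) lborel (\<lambda>f. vector_of_coords f \<bullet> u)
           (normal_density 0 (s * norm (u::'a::euclidean_space)))"
proof -
  interpret P: prob_space "gaussian_coords s :: ('a \<Rightarrow> real) measure"
    by (rule prob_space_gaussian_coords[OF s])
  define I where "I = {b\<in>(Basis::'a set). u \<bullet> b \<noteq> 0}"
  have I: "finite I" "I \<subseteq> Basis" by (auto simp: I_def)
  obtain b0 where "b0 \<in> Basis" "u \<bullet> b0 \<noteq> 0"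
    using u by (metis euclidean_all_zero_iff)
  then have "I \<noteq> {}" by (auto simp: I_def)
  let ?X = "\<lambda>b f. (u \<bullet> b) * f b"
  have indep: "P.indep_vars (\<lambda>_. borel) ?X I"
    using P.indep_vars_compose2[OF indep_vars_gaussian_coords[OF s], of "\<lambda>b x. (u \<bullet> b) * x" "\<lambda>_. borel"]
    by (intro P.indep_vars_subset[OF _ I(2)]) auto
  have component: "distributed (gaussian_coords s) lborel (\<lambda>f. f b) (normal_density 0 s)" if "b \<in> Basis" for b :: 'a
    unfolding distributed_def
  proof (intro conjI)
    show "distr (gaussian_coords s) lborel (\<lambda>f. f b) = density lborel (normal_density 0 s)"
      using s that by (simp add: distr_gaussian_coords_component centered_normal_def)
    show "(\<lambda>f::'a\<Rightarrow>real. f b) \<in> measurable (gaussian_coords s) lborel"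
      using that by (intro measurable_gaussian_coordsI measurable_component_singleton)
  qed simp
  have affine: "distributed (gaussian_coords s) lborel (?X b) (normal_density 0 (\<bar>u \<bullet> b\<bar> * s))"
    if "b \<in> I" for b :: 'a
    using P.normal_density_affine[OF component s, of b "u \<bullet> b" 0] that by (auto simp: I_def)
  have "distributed (gaussian_coords s) lborel (\<lambda>f. \<Sum>b\<in>I. ?X b f)
      (normal_density (\<Sum>b\<in>I. 0) (sqrt (\<Sum>b\<in>I. (\<bar>u \<bullet> b\<bar> * s)\<^sup>2)))"
    by (rule P.sum_indep_normal[OF I(1) \<open>I \<noteq> {}\<close> indep _ affine]) (use s in \<open>auto simp: I_def\<close>)
  moreover have "(\<Sum>b\<in>I. ?X b f) = vector_of_coords f \<bullet> u" for f
    unfolding inner_vector_of_coords I_def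
    by (rule sum.mono_neutral_cong_left) (auto simp: mult.commute)
  moreover have "sqrt (\<Sum>b\<in>I. (\<bar>u \<bullet> b\<bar> * s)\<^sup>2) = s * norm u"
  proof -
    have "(\<Sum>b\<in>I. (\<bar>u \<bullet> b\<bar> * s)\<^sup>2) = s\<^sup>2 * (\<Sum>b\<in>(Basis::'a set). (u \<bullet> b) * (u \<bullet> b))"
      unfolding I_def sum_distrib_left
      by (rule sum.mono_neutral_cong_left) (auto simp: power_mult_distrib power2_eq_square)
    also have "\<dots> = (s * norm u)\<^sup>2"
      by (simp add: euclidean_inner[symmetric] power2_norm_eq_inner power_mult_distrib)
    finally show ?thesis using s by simp
  qed
  ultimately show ?thesis by simp
qed
lemma nn_integral_gaussian_iso_inner:
  assumes "s > 0" "u \<noteq> 0" "g \<in> borel_measurable borel"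
  shows "(\<integral>\<^sup>+x. g (x \<bullet> u) \<partial>(gaussian_iso s :: 'a::euclidean_space measure))
       = (\<integral>\<^sup>+y. ennreal (normal_density 0 (s * norm u) y) * g y \<partial>lborel)"
proof -
  have "(\<integral>\<^sup>+x. g (x \<bullet> u) \<partial>(gaussian_iso s :: 'a measure))
      = (\<integral>\<^sup>+f. g (vector_of_coords f \<bullet> u) \<partial>gaussian_coords s)"
    using assms
    by (simp add: gaussian_iso_eq_distr_coords nn_integral_distr measurable_gaussian_coordsI
                  measurable_vector_of_coords)
  also have "\<dots> = (\<integral>\<^sup>+y. ennreal (normal_density 0 (s * norm u) y) * g y \<partial>lborel)"
    using assms by (intro distributed_nn_integral[symmetric] distributed_gaussian_coords_inner) auto
  finally show ?thesis .
qed

lemma nn_integral_normal_density_square: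
  assumes "s > 0"
  shows "(\<integral>\<^sup>+y. ennreal (normal_density 0 s y) * ennreal (y\<^sup>2) \<partial>lborel) = ennreal (s\<^sup>2)"
proof -
  have "(\<integral>\<^sup>+y. ennreal (normal_density 0 s y) * ennreal (y\<^sup>2) \<partial>lborel)
      = (\<integral>\<^sup>+y. ennreal (normal_density 0 s y * (y - 0) ^ (2 * 1)) \<partial>lborel)"
    by (intro nn_integral_cong) (simp add: ennreal_mult normal_density_nonneg)
  also have "\<dots> = ennreal (\<integral>y. normal_density 0 s y * (y - 0) ^ (2 * 1) \<partial>lborel)"
    using assms by (intro nn_integral_eq_integral integrable_normal_moment) (auto simp: normal_density_nonneg)
  also have "(\<integral>y. normal_density 0 s y * (y - 0) ^ (2 * 1) \<partial>lborel) = s\<^sup>2"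
    using assms by (subst integral_normal_moment_even) (auto simp: power2_eq_square)
  finally show ?thesis .
qed

lemma nn_integral_normal_density_pos_part:
  assumes "s > 0"
  shows "(\<integral>\<^sup>+y. ennreal (normal_density 0 s y) * ennreal (max 0 y) \<partial>lborel) = ennreal (s / sqrt (2 * pi))"
proof -
  have abs: "integrable lborel (\<lambda>y. normal_density 0 s y * \<bar>y - 0\<bar> ^ (2 * 0 + 1))"
    using assms by (rule integrable_normal_moment_abs)
  have id: "integrable lborel (\<lambda>y. normal_density 0 s y * y)"
    using assms by (rule integrable_normal_moment_nz_1)
  have pos_part: "(\<lambda>y. normal_density 0 s y * max 0 y)
      = (\<lambda>y. (normal_density 0 s y * \<bar>y - 0\<bar> ^ (2 * 0 + 1) + normal_density 0 s y * y) / 2)"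
    by (auto simp: max_def fun_eq_iff field_simps)
  have "(\<integral>\<^sup>+y. ennreal (normal_density 0 s y) * ennreal (max 0 y) \<partial>lborel)
      = (\<integral>\<^sup>+y. ennreal (normal_density 0 s y * max 0 y) \<partial>lborel)"
    by (intro nn_integral_cong) (simp add: ennreal_mult normal_density_nonneg)
  also have "\<dots> = ennreal (\<integral>y. normal_density 0 s y * max 0 y \<partial>lborel)"
    using abs id unfolding pos_part[symmetric]
    by (intro nn_integral_eq_integral) (auto simp: pos_part normal_density_nonneg)
  also have "(\<integral>y. normal_density 0 s y * max 0 y \<partial>lborel) = s * sqrt (2 / pi) / 2"
    unfolding pos_part using assms abs id
    by (simp add: integral_normal_moment_nz_1 integral_normal_moment_abs_odd[of s 0 0, simplified])
  also have "s * sqrt (2 / pi) / 2 = s / sqrt (2 * pi)"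
    by (simp add: real_sqrt_divide real_sqrt_mult field_simps)
  finally show ?thesis .
qed

lemma nn_integral_gaussian_iso_norm_squared:
  assumes "s > 0"
  shows "(\<integral>\<^sup>+x. ennreal ((norm x)\<^sup>2) \<partial>(gaussian_iso s :: 'a::euclidean_space measure))
       = ennreal (real DIM('a) * s\<^sup>2)"
proof -
  have "(norm x)\<^sup>2 = (\<Sum>b\<in>(Basis::'a set). (x \<bullet> b)\<^sup>2)" for x :: 'a
    unfolding power2_norm_eq_inner euclidean_inner[of x x] by (simp add: power2_eq_square)
  then have "(\<integral>\<^sup>+x. ennreal ((norm x)\<^sup>2) \<partial>(gaussian_iso s :: 'a measure))
      = (\<integral>\<^sup>+x. (\<Sum>b\<in>(Basis::'a set). ennreal ((x \<bullet> b)\<^sup>2)) \<partial>gaussian_iso s)"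
    by (simp add: sum_ennreal)
  also have "\<dots> = (\<Sum>b\<in>(Basis::'a set). \<integral>\<^sup>+x. ennreal ((x \<bullet> b)\<^sup>2) \<partial>gaussian_iso s)"
    by (rule nn_integral_sum) (auto simp: gaussian_iso_def)
  also have "\<dots> = (\<Sum>b\<in>(Basis::'a set). ennreal (s\<^sup>2))"
    using assms
    by (intro sum.cong refl)
       (simp add: nn_integral_gaussian_iso_inner[where g="\<lambda>y. ennreal (y\<^sup>2)"] nonzero_Basis
                  nn_integral_normal_density_square)
  also have "\<dots> = ennreal (real DIM('a) * s\<^sup>2)"
    by (simp add: ennreal_mult ennreal_of_nat_eq_real_of_nat)
  finally show ?thesis .
qed

lemma nn_integral_gaussian_iso_pos_part_inner:
  assumes "s > 0" "u \<noteq> 0"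
  shows "(\<integral>\<^sup>+x. ennreal (max 0 (x \<bullet> u)) \<partial>(gaussian_iso s :: 'a::euclidean_space measure))
       = ennreal (s * norm u / sqrt (2 * pi))"
  using assms
  by (subst nn_integral_gaussian_iso_inner[where g="\<lambda>y. ennreal (max 0 y)"])
     (simp_all add: nn_integral_normal_density_pos_part del: ennreal_max_0)

lemma min_dist_add_pos_part_inner_le:
  fixes x u :: "'a::real_inner"
  assumes "norm u = r" "r > 0"
  shows "min r (norm (x - u)) + max 0 (x \<bullet> u / r) \<le> r + (norm x)\<^sup>2 / (2 * r)"
proof (cases "x \<bullet> u > 0")
  case False
  then have "x \<bullet> u / r \<le> 0"
    using assms(2) by (simp add: divide_nonpos_pos)
  then have "max 0 (x \<bullet> u / r) = 0"
    by (rule max_absorb1)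
  moreover have "0 \<le> (norm x)\<^sup>2 / (2 * r)"
    using assms(2) by simp
  ultimately show ?thesis by linarith
next
  case True
  have "(norm (x - u))\<^sup>2 = (norm x)\<^sup>2 - 2 * (x \<bullet> u) + r\<^sup>2"
    using assms(1) power2_norm_eq_inner[of u]
    by (simp add: power2_norm_eq_inner inner_diff_left inner_diff_right inner_commute)
  moreover have "2 * r * norm (x - u) \<le> (norm (x - u))\<^sup>2 + r\<^sup>2"
    using zero_le_power2[of "norm (x - u) - r"] by (simp add: power2_diff mult.commute mult.left_commute)
  ultimately have "norm (x - u) * (2 * r) \<le> (norm x)\<^sup>2 - 2 * (x \<bullet> u) + 2 * r\<^sup>2"
    by (simp add: mult.commute)
  then have "norm (x - u) \<le> ((norm x)\<^sup>2 - 2 * (x \<bullet> u) + 2 * r\<^sup>2) / (2 * r)"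
    using assms(2) by (simp add: pos_le_divide_eq)
  also have "\<dots> = r + (norm x)\<^sup>2 / (2 * r) - x \<bullet> u / r"
    using assms(2) by (simp add: field_simps power2_eq_square)
  finally have "norm (x - u) \<le> r + (norm x)\<^sup>2 / (2 * r) - x \<bullet> u / r" .
  then show ?thesis using True assms(2) by (simp add: max_def)
qed

lemma nn_integral_gaussian_iso_min_dist_le:
  fixes u :: "'a::euclidean_space"
  assumes \<sigma>: "\<sigma> > 0" and u: "u \<noteq> 0"
  shows "(\<integral>\<^sup>+x. ennreal (min (norm u) (norm (x - u))) \<partial>gaussian_iso \<sigma>)
     \<le> ennreal (norm u + real DIM('a) * \<sigma>\<^sup>2 / (2 * norm u) - \<sigma> / sqrt (2 * pi))"
proof -
  let ?G = "gaussian_iso \<sigma> :: 'a measure"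
  define r where "r = norm u"
  have r: "r > 0" using u by (simp add: r_def)
  interpret prob_space "gaussian_iso \<sigma> :: 'a measure" by (rule prob_space_gaussian_iso[OF \<sigma>])
  have [simp]: "space (gaussian_iso \<sigma> :: 'a measure) = UNIV"
    and [measurable_cong]: "sets (gaussian_iso \<sigma> :: 'a measure) = sets borel"
    by (simp_all add: gaussian_iso_def)
  have pos_part: "(\<integral>\<^sup>+x. ennreal (max 0 (x \<bullet> u / r)) \<partial>?G) = ennreal (\<sigma> / sqrt (2 * pi))"
    using nn_integral_gaussian_iso_pos_part_inner[OF \<sigma>, of "u /\<^sub>R r"] r u by (simp add: r_def inverse_eq_divide)
  have "(\<integral>\<^sup>+x. ennreal (min r (norm (x - u))) \<partial>?G) + ennreal (\<sigma> / sqrt (2 * pi))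
      = (\<integral>\<^sup>+x. ennreal (min r (norm (x - u))) + ennreal (max 0 (x \<bullet> u / r)) \<partial>?G)"
    unfolding pos_part[symmetric] by (rule nn_integral_add[symmetric]) auto
  also have "\<dots> \<le> (\<integral>\<^sup>+x. ennreal r + ennreal (1 / (2 * r)) * ennreal ((norm x)\<^sup>2) \<partial>?G)"
  proof (rule nn_integral_mono)
    fix x :: 'a
    have "min r (norm (x - u)) + max 0 (x \<bullet> u / r) \<le> r + 1 / (2 * r) * (norm x)\<^sup>2"
      using min_dist_add_pos_part_inner_le[of u r x] r by (simp add: r_def)
    then have "ennreal (min r (norm (x - u)) + max 0 (x \<bullet> u / r)) \<le> ennreal (r + 1 / (2 * r) * (norm x)\<^sup>2)"
      by (rule ennreal_leI)
    moreover have "ennreal (min r (norm (x - u)) + max 0 (x \<bullet> u / r))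
        = ennreal (min r (norm (x - u))) + ennreal (max 0 (x \<bullet> u / r))"
      using r by (intro ennreal_plus) auto
    moreover have "ennreal (r + 1 / (2 * r) * (norm x)\<^sup>2) = ennreal r + ennreal (1 / (2 * r)) * ennreal ((norm x)\<^sup>2)"
      using r by (subst ennreal_plus) (auto simp: ennreal_mult[symmetric])
    ultimately show "ennreal (min r (norm (x - u))) + ennreal (max 0 (x \<bullet> u / r))
        \<le> ennreal r + ennreal (1 / (2 * r)) * ennreal ((norm x)\<^sup>2)"
      by simp
  qed
  also have "\<dots> = ennreal r + ennreal (1 / (2 * r)) * (\<integral>\<^sup>+x. ennreal ((norm x)\<^sup>2) \<partial>?G)"
    using emeasure_space_1 by (subst nn_integral_add) (auto simp: nn_integral_cmult)
  also have "\<dots> = ennreal (r + real DIM('a) * \<sigma>\<^sup>2 / (2 * r))"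
    using r by (simp add: nn_integral_gaussian_iso_norm_squared[OF \<sigma>] ennreal_mult[symmetric]
                          ennreal_plus[symmetric] del: ennreal_plus)
  finally have "(\<integral>\<^sup>+x. ennreal (min r (norm (x - u))) \<partial>?G)
      \<le> ennreal (r + real DIM('a) * \<sigma>\<^sup>2 / (2 * r)) - ennreal (\<sigma> / sqrt (2 * pi))"
    by (simp add: ennreal_le_minus_iff)
  also have "\<dots> = ennreal (r + real DIM('a) * \<sigma>\<^sup>2 / (2 * r) - \<sigma> / sqrt (2 * pi))"
    using \<sigma> by (intro ennreal_minus) simp
  finally show ?thesis unfolding r_def .
qed

lemma gaussian_step_gain_le:
  fixes d c r s \<sigma> :: real
  assumes "0 < d" "d \<le> c" "0 < r" "1/4 \<le> s" "s \<le> 1/2"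
    and \<sigma>: "\<sigma> = s * r / (sqrt pi * c)"
  shows "r + d * \<sigma>\<^sup>2 / (2 * r) - \<sigma> / sqrt (2 * pi) \<le> (1 - 1 / (8 * pi * c)) * r"
proof -
  have c: "c > 0" using assms by linarith
  have "sqrt 2 \<ge> 1.4"
    by (rule real_le_rsqrt) (simp add: power2_eq_square)
  have "(s - 1/4) * (s - 1/2) \<le> 0"
    using assms by (intro mult_nonneg_nonpos) auto
  then have "s\<^sup>2 \<le> 3/4 * s - 1/8"
    by (simp add: algebra_simps power2_eq_square)
  moreover have "1.4 * s \<le> sqrt 2 * s"
    using \<open>sqrt 2 \<ge> 1.4\<close> assms by (intro mult_right_mono) auto
  ultimately have "4 * s\<^sup>2 - 4 * sqrt 2 * s + 1 \<le> 0"
    using assms by linarith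
  moreover have "4 * (d / c) * s\<^sup>2 \<le> 4 * 1 * s\<^sup>2"
    using assms c by (intro mult_right_mono mult_left_mono) auto
  ultimately have gain: "4 * (d / c) * s\<^sup>2 - 4 * sqrt 2 * s \<le> -1"
    by linarith
  have "d * \<sigma>\<^sup>2 / (2 * r) - \<sigma> / sqrt (2 * pi) = r / (8 * pi * c) * (4 * (d / c) * s\<^sup>2 - 4 * sqrt 2 * s)"
    using c assms(3) unfolding \<sigma> by (simp add: real_sqrt_mult field_simps power2_eq_square)
  also have "\<dots> \<le> r / (8 * pi * c) * (-1)"
    using gain c assms(3) by (intro mult_left_mono) auto
  finally show ?thesis by (simp add: algebra_simps)
qed

lemma nn_integral_gaussian_iso_min_dist_contracts:
  fixes u :: "'a::euclidean_space"
  assumes "norm u = r" "r > 0" "real DIM('a) \<le> c" "1/4 \<le> s" "s \<le> 1/2"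
  shows "(\<integral>\<^sup>+x. ennreal (min r (norm (x - u))) \<partial>gaussian_iso (s * r / (sqrt pi * c)))
     \<le> ennreal ((1 - 1 / (8 * pi * c)) * r)"
proof -
  have "c > 0" using assms(3) DIM_positive[where 'a='a] by linarith
  then have "s * r / (sqrt pi * c) > 0" using assms by simp
  then show ?thesis
    using nn_integral_gaussian_iso_min_dist_le[of "s * r / (sqrt pi * c)" u]
          gaussian_step_gain_le[of "real DIM('a)" c r s] assms
    by (force intro: order_trans ennreal_leI)
qed

lemma gauss_const_ge: "real d \<le> gauss_const d"
proof -
  have "real d \<le> (sqrt (real d) + ln 2)\<^sup>2"
    using power_mono[of "sqrt (real d)" "sqrt (real d) + ln 2" 2] by simp
  moreover have "ln (2::real) \<ge> 0" by simp
  ultimately show ?thesis unfolding gauss_const_def by linarith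
qed

lemma gauss_const_DIM_bounds: "real DIM('a::euclidean_space) \<le> gauss_const DIM('a)" "1 \<le> gauss_const DIM('a)"
proof -
  have "1 \<le> real DIM('a)"
    using DIM_positive[where 'a='a] by linarith
  then show "real DIM('a) \<le> gauss_const DIM('a)" "1 \<le> gauss_const DIM('a)"
    using gauss_const_ge[of "DIM('a)"] by linarith+
qed

lemma gauss_const_pos: "gauss_const d > 0"
  unfolding gauss_const_def by (intro add_nonneg_pos) auto

lemma gauss_sigma_pos: "\<alpha> > 0 \<Longrightarrow> gauss_sigma d \<alpha> l > 0"
  unfolding gauss_sigma_def using gauss_const_pos[of d] by simp

lemma prob_space_noise_measure: "\<alpha> > 0 \<Longrightarrow> prob_space (noise_measure \<Omega> \<alpha>)"
  unfolding noise_measure_def by (intro prob_space_PiM) (auto intro!: prob_space_gaussian_iso gauss_sigma_pos)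

lemma nn_integral_noise_measure_component:
  fixes \<Omega> :: "'a::euclidean_space set"
  assumes "\<alpha> > 0" "(k, l) \<in> var_index \<Omega> \<alpha>" "g \<in> borel_measurable borel"
  shows "(\<integral>\<^sup>+N. g (N (k, l)) \<partial>noise_measure \<Omega> \<alpha>) = (\<integral>\<^sup>+x. g x \<partial>gaussian_iso (gauss_sigma DIM('a) \<alpha> l))"
proof -
  let ?M = "\<lambda>(k, l). gaussian_iso (gauss_sigma DIM('a) \<alpha> l) :: 'a measure"
  let ?G = "gaussian_iso (gauss_sigma DIM('a) \<alpha> l) :: 'a measure"
  have "distr (PiM (var_index \<Omega> \<alpha>) ?M) (?M (k, l)) (\<lambda>N. N (k, l)) = ?M (k, l)"
    by (rule distr_PiM_component) (use assms in \<open>auto intro: prob_space_gaussian_iso gauss_sigma_pos\<close>)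
  then have "distr (noise_measure \<Omega> \<alpha>) ?G (\<lambda>N. N (k, l)) = ?G"
    by (simp add: noise_measure_def)
  moreover have "(\<lambda>N. N (k, l)) \<in> measurable (noise_measure \<Omega> \<alpha>) ?G"
    unfolding noise_measure_def using measurable_component_singleton[OF assms(2), of ?M] by simp
  moreover have "g \<in> borel_measurable ?G"
    using assms(3) by (simp add: gaussian_iso_def)
  ultimately show ?thesis
    by (metis nn_integral_distr)
qed

lemma Min_dist_Vars_le_dist:
  "Min ((\<lambda>z. norm (z - z2)) ` Vars \<Omega> \<alpha> z1 N) \<le> norm (z1 - z2)"
  by (intro Min_le) (auto simp: Vars_def var_index_def)

lemma Min_dist_Vars_le_variation:
  assumes "closed \<Omega>" "convex \<Omega>" "z2 \<in> \<Omega>" "i \<in> var_index \<Omega> \<alpha>"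
  shows "Min ((\<lambda>z. norm (z - z2)) ` Vars \<Omega> \<alpha> z1 N) \<le> norm (N i - (z2 - z1))"
proof -
  have "Min ((\<lambda>z. norm (z - z2)) ` Vars \<Omega> \<alpha> z1 N) \<le> dist (closest_point \<Omega> (z1 + N i)) (closest_point \<Omega> z2)"
    using assms by (intro Min_le) (auto simp: Vars_def var_index_def closest_point_self dist_norm)
  also have "\<dots> \<le> dist (z1 + N i) z2"
    using assms by (intro closest_point_lipschitz) auto
  finally show ?thesis by (simp add: dist_norm algebra_simps)
qed

lemma nn_integral_Min_dist_Vars_le_gaussian:
  fixes \<Omega> :: "'a::euclidean_space set"
  assumes "closed \<Omega>" "convex \<Omega>" "\<alpha> > 0" "z2 \<in> \<Omega>" "(k, l) \<in> var_index \<Omega> \<alpha>"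
  shows "(\<integral>\<^sup>+ N. ennreal (Min ((\<lambda>z. norm (z - z2)) ` Vars \<Omega> \<alpha> z1 N)) \<partial>noise_measure \<Omega> \<alpha>)
     \<le> (\<integral>\<^sup>+ x. ennreal (min (norm (z1 - z2)) (norm (x - (z2 - z1)))) \<partial>gaussian_iso (gauss_sigma DIM('a) \<alpha> l))"
proof -
  have "(\<integral>\<^sup>+ N. ennreal (Min ((\<lambda>z. norm (z - z2)) ` Vars \<Omega> \<alpha> z1 N)) \<partial>noise_measure \<Omega> \<alpha>)
      \<le> (\<integral>\<^sup>+ N. ennreal (min (norm (z1 - z2)) (norm (N (k, l) - (z2 - z1)))) \<partial>noise_measure \<Omega> \<alpha>)"
    using assms
    by (intro nn_integral_mono ennreal_leI min.boundedI Min_dist_Vars_le_dist Min_dist_Vars_le_variation)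
  also have "\<dots> = (\<integral>\<^sup>+ x. ennreal (min (norm (z1 - z2)) (norm (x - (z2 - z1)))) \<partial>gaussian_iso (gauss_sigma DIM('a) \<alpha> l))"
    using assms(3,5) by (rule nn_integral_noise_measure_component) measurable
  finally show ?thesis .
qed

lemma exists_dyadic_scale:
  fixes q Q :: real
  assumes "2 \<le> q" "q \<le> Q"
  shows "\<exists>l::nat. 1 \<le> l \<and> int l \<le> \<lceil>log 2 Q\<rceil> \<and> q / 4 \<le> 2 ^ (l - 1) \<and> 2 ^ (l - 1) \<le> q / 2"
proof -
  define l where "l = nat \<lfloor>log 2 q\<rfloor>"
  have "1 \<le> log 2 q" using assms by (simp add: le_log_iff)
  then have l: "real l = \<lfloor>log 2 q\<rfloor>" "1 \<le> l" by (simp_all add: l_def le_nat_iff)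
  have "int l \<le> \<lceil>log 2 Q\<rceil>"
    using assms \<open>1 \<le> log 2 q\<close> log_le_cancel_iff[of 2 q Q] unfolding l_def by linarith
  moreover have "(2::real) ^ l \<le> q"
  proof -
    have "(2::real) ^ l = 2 powr (real l)" by (simp add: powr_realpow)
    also have "\<dots> \<le> 2 powr (log 2 q)" using l by (intro powr_mono) linarith+
    finally show ?thesis using assms by simp
  qed
  moreover have "q < 2 * 2 ^ l"
  proof -
    have "q = 2 powr (log 2 q)" using assms by simp
    also have "\<dots> < 2 powr (real l + 1)" using l by (intro powr_less_mono) linarith+
    finally show ?thesis by (simp add: powr_add powr_realpow)
  qed
  moreover have "(2::real) ^ l = 2 * 2 ^ (l - 1)" using l(2) by (simp add: power_eq_if)
  ultimately show ?thesis using l(2) by (intro exI[of _ l]) auto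
qed

lemma exists_scale_in_var_index:
  fixes \<Omega> :: "'a::euclidean_space set"
  assumes "\<alpha> > 0" "2 * \<alpha> \<le> r" "r \<le> diameter \<Omega>"
  obtains l where "(1, l) \<in> var_index \<Omega> \<alpha>" "1/4 \<le> \<alpha> * 2 ^ (l - 1) / r" "\<alpha> * 2 ^ (l - 1) / r \<le> 1/2"
proof -
  have "2 \<le> r / \<alpha>" "r / \<alpha> \<le> diameter \<Omega> / \<alpha>"
    using assms by (simp_all add: le_divide_eq divide_right_mono)
  then obtain l :: nat where l: "1 \<le> l" "int l \<le> num_scales \<Omega> \<alpha>"
    "r / \<alpha> / 4 \<le> 2 ^ (l - 1)" "2 ^ (l - 1) \<le> r / \<alpha> / 2"
    unfolding num_scales_def by (metis exists_dyadic_scale)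
  moreover have "r > 0" using assms by linarith
  ultimately show ?thesis
    using assms(1) by (intro that[of l]) (simp_all add: var_index_def field_simps)
qed

lemma nn_integral_Min_dist_Vars_le_dist:
  assumes "\<alpha> > 0"
  shows "(\<integral>\<^sup>+ N. ennreal (Min ((\<lambda>z. norm (z - z2)) ` Vars \<Omega> \<alpha> z1 N)) \<partial>noise_measure \<Omega> \<alpha>)
     \<le> ennreal (norm (z1 - z2))"
proof -
  have "(\<integral>\<^sup>+ N. ennreal (Min ((\<lambda>z. norm (z - z2)) ` Vars \<Omega> \<alpha> z1 N)) \<partial>noise_measure \<Omega> \<alpha>)
      \<le> (\<integral>\<^sup>+ N. ennreal (norm (z1 - z2)) \<partial>noise_measure \<Omega> \<alpha>)"
    by (intro nn_integral_mono ennreal_leI Min_dist_Vars_le_dist)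
  also have "\<dots> = ennreal (norm (z1 - z2))"
    using prob_space.emeasure_space_1[OF prob_space_noise_measure[OF assms, of \<Omega>]] by simp
  finally show ?thesis .
qed

lemma nn_integral_Min_dist_Vars_le_contraction:
  fixes \<Omega> :: "'a::euclidean_space set"
  assumes "closed \<Omega>" "convex \<Omega>" "bounded \<Omega>" "\<alpha> > 0" "z1 \<in> \<Omega>" "z2 \<in> \<Omega>"
    and "2 * \<alpha> \<le> norm (z1 - z2)"
  shows "(\<integral>\<^sup>+ N. ennreal (Min ((\<lambda>z. norm (z - z2)) ` Vars \<Omega> \<alpha> z1 N)) \<partial>noise_measure \<Omega> \<alpha>)
     \<le> ennreal ((1 - 1 / (8 * pi * gauss_const DIM('a))) * norm (z1 - z2))"
proof -
  define c where "c = gauss_const DIM('a)"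
  define r where "r = norm (z1 - z2)"
  have "r > 0" using assms(4,7) unfolding r_def by linarith
  have "r \<le> diameter \<Omega>"
    using diameter_bounded_bound[OF assms(3,5,6)] by (simp add: r_def dist_norm)
  then obtain l where l: "(1, l) \<in> var_index \<Omega> \<alpha>"
    "1/4 \<le> \<alpha> * 2 ^ (l - 1) / r" "\<alpha> * 2 ^ (l - 1) / r \<le> 1/2"
    using exists_scale_in_var_index assms(4,7) unfolding r_def by blast
  have \<sigma>: "gauss_sigma DIM('a) \<alpha> l = (\<alpha> * 2 ^ (l - 1) / r) * r / (sqrt pi * c)"
    using \<open>r > 0\<close> by (simp add: gauss_sigma_def c_def)
  have "(\<integral>\<^sup>+ N. ennreal (Min ((\<lambda>z. norm (z - z2)) ` Vars \<Omega> \<alpha> z1 N)) \<partial>noise_measure \<Omega> \<alpha>)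
      \<le> (\<integral>\<^sup>+ x. ennreal (min r (norm (x - (z2 - z1)))) \<partial>gaussian_iso (gauss_sigma DIM('a) \<alpha> l))"
    unfolding r_def using assms(1,2,4,6) l(1) by (rule nn_integral_Min_dist_Vars_le_gaussian)
  also have "\<dots> \<le> ennreal ((1 - 1 / (8 * pi * c)) * r)"
    unfolding \<sigma> using gauss_const_DIM_bounds[where 'a='a] l \<open>r > 0\<close>
    by (intro nn_integral_gaussian_iso_min_dist_contracts) (simp_all add: r_def c_def norm_minus_commute)
  finally show ?thesis by (simp add: c_def r_def)
qed

theorem mainTheorem5:
  fixes \<Omega> :: "'a::euclidean_space set" and \<alpha> :: real and z1 z2 :: 'a
  assumes "closed \<Omega>" and "convex \<Omega>" and "bounded \<Omega>"
    and "\<alpha> > 0" and "z1 \<in> \<Omega>" and "z2 \<in> \<Omega>"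
  shows "(\<integral>\<^sup>+ N. ennreal (Min ((\<lambda>z. norm (z - z2)) ` Vars \<Omega> \<alpha> z1 N)) \<partial>noise_measure \<Omega> \<alpha>)
           \<le> ennreal ((1 - 1 / (8 * pi * gauss_const DIM('a))) * norm (z1 - z2) + \<alpha>)"
proof (cases "2 * \<alpha> \<le> norm (z1 - z2)")
  case True
  then show ?thesis
    using nn_integral_Min_dist_Vars_le_contraction[OF assms True] \<open>\<alpha> > 0\<close>
    by (simp add: order_trans[OF _ ennreal_leI])
next
  case False
  define \<gamma> where "\<gamma> = 1 / (8 * pi * gauss_const DIM('a))"
  have "8 * 1 * 1 \<le> 8 * pi * gauss_const DIM('a)"
    using gauss_const_DIM_bounds(2)[where 'a='a] pi_ge_two by (intro mult_mono) auto
  then have "\<gamma> \<le> 1/2"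
    by (simp add: \<gamma>_def)
  then have "\<gamma> * norm (z1 - z2) \<le> \<alpha>"
    using False mult_right_mono[of \<gamma> "1/2" "norm (z1 - z2)"] by simp
  then have "norm (z1 - z2) \<le> (1 - \<gamma>) * norm (z1 - z2) + \<alpha>"
    by (simp add: algebra_simps)
  moreover have "(\<integral>\<^sup>+ N. ennreal (Min ((\<lambda>z. norm (z - z2)) ` Vars \<Omega> \<alpha> z1 N)) \<partial>noise_measure \<Omega> \<alpha>)
      \<le> ennreal (norm (z1 - z2))"
    using \<open>\<alpha> > 0\<close> by (rule nn_integral_Min_dist_Vars_le_dist)
  ultimately show ?thesis
    by (simp add: \<gamma>_def order_trans[OF _ ennreal_leI])
qed

end
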